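(* For $n\ge0$ let $\mathcal{G}_n$ be the set of words $w=w_1\cdots w_{2n}$ over $\{0,1\}$ consisting of $n$ zeros and $n$ ones, and let $\mathrm{da}(w)=|\{i\in[n]: w_i\neq w_{2n+1-i}\}|$. Then $$\sum_{n\ge0}\sum_{w\in\mathcal{G}_n} t^{\mathrm{da}(w)}x^n=\frac{1}{\sqrt{1-4tx+4(t^2-1)x^2}}.$$
   Context: $[n]=\{1,2,\dots,n\}$. *)

theory Defs
  imports Complex_Main
begin

text \<open>Words over {0,1} of length 2n with n zeros and n ones (positions 1..2n
  correspond to list indices 0..2n-1).\<close>
definition G :: "nat \<Rightarrow> nat list set" where
  "G n = {w. length w = 2 * n \<and> set w \<subseteq> {0, 1} \<and> count_list w 0 = n \<and> count_list w 1 = n}"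

definition da :: "nat list \<Rightarrow> nat" where
  "da w = card {i \<in> {1..length w div 2}. w ! (i - 1) \<noteq> w ! (length w - i)}"

end

theory Submission
  imports Defs "HOL-Analysis.Analysis"
begin

(* Pair position i with position 2n+1-i.  Each of the n pairs reads 00, 01, 10 or 11, so
   marking zeros by z and mismatched pairs by t, the weights of all binary words of length 2n
   add up to (1 + 2tz + z^2)^n, and the required sum over G n is its coefficient of z^n,
   namely the sum over a of C(n,2a) C(2a,a) (2t)^(n-2a).
   On the analytic side, with y = 2tx,
     1/sqrt((1-y)^2 - 4x^2) = sum_a C(2a,a) x^(2a) / (1-y)^(2a+1)
                            = sum_a sum_d C(2a,a) C(2a+d,d) x^(2a) y^d,
   a double series that converges absolutely for small x; collecting the terms with
   2a + d = n gives exactly these coefficients. *)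

definition binary_words :: "nat \<Rightarrow> nat list set" where
  "binary_words n = {w. set w \<subseteq> {0, 1} \<and> length w = n}"

lemma finite_binary_words: "finite (binary_words n)"
  unfolding binary_words_def by (rule finite_lists_length_eq) simp

lemma binary_words_0: "binary_words 0 = {[]}"
  unfolding binary_words_def by auto

lemma binary_words_Suc_Suc:
  "binary_words (Suc (Suc n))
    = (\<lambda>(a, w, b). a # w @ [b]) ` ({0, 1} \<times> binary_words n \<times> {0, 1})"
proof (intro equalityI subsetI)
  fix v assume v: "v \<in> binary_words (Suc (Suc n))"
  then obtain a v' where "v = a # v'"
    unfolding binary_words_def by (cases v) auto
  moreover with v obtain u b where "v' = u @ [b]"
    unfolding binary_words_def by (cases v' rule: rev_cases) auto
  ultimately have "v = a # u @ [b]" by simp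
  with v show "v \<in> (\<lambda>(a, w, b). a # w @ [b]) ` ({0, 1} \<times> binary_words n \<times> {0, 1})"
    unfolding binary_words_def by (intro image_eqI[of _ _ "(a, u, b)"]) auto
qed (auto simp: binary_words_def)

lemma da_Nil: "da [] = 0"
  unfolding da_def by simp

lemma da_eq_card_mismatches: "da w = card {i \<in> {..<length w div 2}. w ! i \<noteq> rev w ! i}"
proof -
  have "length w div 2 \<le> length w" by simp
  then have "{i \<in> Suc ` {..<length w div 2}. w ! (i - 1) \<noteq> w ! (length w - i)}
        = Suc ` {i \<in> {..<length w div 2}. w ! i \<noteq> rev w ! i}"
    by (auto simp: rev_nth)
  then show ?thesis
    unfolding da_def image_Suc_lessThan by (simp add: card_image)
qed

lemma da_Cons_snoc: "da (a # w @ [b]) = da w + (if a = b then 0 else 1)"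
proof -
  let ?M = "\<lambda>v. {i \<in> {..<length v div 2}. v ! i \<noteq> rev v ! i}"
  have "(a # w @ [b]) ! Suc i = w ! i" "rev (a # w @ [b]) ! Suc i = rev w ! i"
    if "i < length w div 2" for i
    using that less_le_trans[OF that div_le_dividend] by (simp_all add: nth_append)
  then have "?M (a # w @ [b]) = (if a = b then {} else {0}) \<union> Suc ` ?M w"
    by (auto simp: lessThan_Suc_eq_insert_0 inj_image_mem_iff)
  moreover have "finite (?M w)" "0 \<notin> Suc ` ?M w"
    by auto
  ultimately show ?thesis
    by (simp add: da_eq_card_mismatches card_image)
qed

lemma sum_binary_words_monom_da:
  fixes t :: "'a::comm_semiring_1"
  shows "(\<Sum>w\<in>binary_words (2 * n). monom (t ^ da w) (count_list w 0))
    = [:1, 2 * t, 1:] ^ n"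
proof (induction n)
  case 0
  show ?case by (simp add: binary_words_0 da_Nil)
next
  case (Suc n)
  let ?m = "\<lambda>w. monom (t ^ da w) (count_list w 0)"
  let ?pair = "\<lambda>a b :: nat. monom (t ^ (if a = b then 0 else 1)) (count_list [a, b] 0)"
  have m_Cons_snoc: "?m (a # w @ [b]) = ?pair a b * ?m w" for a w b
    by (simp add: da_Cons_snoc mult_monom power_add ac_simps)
  have pairs: "?pair 0 0 + ?pair 0 1 + ?pair 1 0 + ?pair 1 1 = [:1, 2 * t, 1:]"
    by (rule poly_eqI) (simp add: coeff_monom coeff_pCons mult_2 split: nat.split)
  have "(\<Sum>w\<in>binary_words (2 * Suc n). ?m w)
      = (\<Sum>(a, w, b)\<in>{0, 1} \<times> binary_words (2 * n) \<times> {0, 1}. ?m (a # w @ [b]))"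
    unfolding mult_Suc_right add_2_eq_Suc binary_words_Suc_Suc
    by (subst sum.reindex) (auto simp: inj_on_def case_prod_unfold)
  also have "\<dots> = (\<Sum>(a, w, b)\<in>{0, 1} \<times> binary_words (2 * n) \<times> {0, 1}. ?pair a b * ?m w)"
    by (simp only: m_Cons_snoc)
  also have "\<dots> = (?pair 0 0 + ?pair 0 1 + ?pair 1 0 + ?pair 1 1)
      * (\<Sum>w\<in>binary_words (2 * n). ?m w)"
    by (simp add: sum.cartesian_product[symmetric] sum.distrib sum_distrib_left distrib_right
        add.assoc)
  finally show ?case
    by (simp only: pairs Suc.IH power_Suc)
qed

lemma count_list_0_add_count_list_1:
  "set w \<subseteq> {0, 1} \<Longrightarrow> count_list w 0 + count_list w (1 :: nat) = length w"
  by (induction w) auto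

lemma G_eq_binary_words: "G n = {w \<in> binary_words (2 * n). count_list w 0 = n}"
  unfolding G_def binary_words_def using count_list_0_add_count_list_1 by fastforce

lemma sum_G_eq_coeff:
  fixes t :: "'a::comm_semiring_1"
  shows "(\<Sum>w\<in>G n. t ^ da w) = coeff ([:1, 2 * t, 1:] ^ n) n"
proof -
  have "coeff ([:1, 2 * t, 1:] ^ n) n
      = (\<Sum>w\<in>binary_words (2 * n). if count_list w 0 = n then t ^ da w else 0)"
    by (simp add: sum_binary_words_monom_da[symmetric] coeff_sum coeff_monom eq_commute)
  also have "\<dots> = (\<Sum>w\<in>G n. t ^ da w)"
    by (simp add: G_eq_binary_words sum.inter_filter finite_binary_words)
  finally show ?thesis ..
qed

lemma coeff_one_plus_X_squared_power:
  "coeff ([:1, 0, 1:] ^ k) j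
    = (if even j then of_nat (k choose (j div 2)) else (0 :: 'a::comm_semiring_1))"
proof -
  have "[:1, 0, 1:] = monom 1 2 + (1 :: 'a poly)"
    by (rule poly_eqI) (simp add: coeff_monom coeff_pCons split: nat.split)
  then have "[:1, 0, 1:] ^ k = (\<Sum>i\<le>k. of_nat (k choose i) * monom (1 :: 'a) 2 ^ i)"
    by (simp add: binomial_ring)
  also have "\<dots> = (\<Sum>i\<le>k. monom (of_nat (k choose i)) (2 * i))"
    by (simp add: monom_power of_nat_poly smult_monom mult.commute)
  finally have expansion:
    "[:1, 0, 1:] ^ k = (\<Sum>i\<le>k. monom (of_nat (k choose i) :: 'a) (2 * i))" .
  have "coeff ([:1, 0, 1:] ^ k) j
      = (\<Sum>i\<le>k. coeff (monom (of_nat (k choose i) :: 'a) (2 * i)) j)"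
    unfolding expansion by (rule coeff_sum)
  also have "\<dots> = (\<Sum>i\<le>k. if j = 2 * i then of_nat (k choose i) else 0)"
    by (simp add: coeff_monom eq_commute)
  also have "\<dots> = (if even j then of_nat (k choose (j div 2)) else 0)"
    by (cases "even j") (auto simp: sum.delta' binomial_eq_0 elim!: evenE intro!: sum.neutral)
  finally show ?thesis .
qed

lemma coeff_trinomial_power_middle:
  fixes b :: "'a::comm_semiring_1"
  shows "coeff ([:1, b, 1:] ^ n) n
    = (\<Sum>a | 2 * a \<le> n. of_nat (n choose (2 * a)) * of_nat ((2 * a) choose a) * b ^ (n - 2 * a))"
proof -
  have "[:1, b, 1:] = [:1, 0, 1:] + monom b 1"
    by (rule poly_eqI) (simp add: coeff_monom coeff_pCons split: nat.split)
  then have "coeff ([:1, b, 1:] ^ n) n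
      = (\<Sum>k\<le>n. coeff (monom (b ^ (n - k)) (n - k) * (of_nat (n choose k) * [:1, 0, 1:] ^ k)) n)"
    by (simp add: binomial_ring coeff_sum monom_power mult_ac)
  also have "\<dots> = (\<Sum>k\<le>n. of_nat (n choose k) * coeff ([:1, 0, 1:] ^ k) k * b ^ (n - k))"
    by (intro sum.cong refl) (auto simp: coeff_monom_mult of_nat_poly mult_ac)
  also have "\<dots> = (\<Sum>k\<le>n. if even k
      then of_nat (n choose k) * of_nat (k choose (k div 2)) * b ^ (n - k) else 0)"
    by (intro sum.cong refl) (simp add: coeff_one_plus_X_squared_power)
  also have "\<dots> = (\<Sum>k\<in>{k \<in> {..n}. even k}.
      of_nat (n choose k) * of_nat (k choose (k div 2)) * b ^ (n - k))"
    by (rule sum.inter_filter[symmetric]) simp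
  also have "{k \<in> {..n}. even k} = (\<lambda>a. 2 * a) ` {a. 2 * a \<le> n}"
    by (auto elim!: evenE)
  finally show ?thesis
    by (simp add: sum.reindex inj_on_def)
qed

lemma gbinomial_minus_half_times_minus_4_power:
  "((-1/2 :: 'a::field_char_0) gchoose n) * (-4) ^ n = of_nat ((2 * n) choose n)"
proof -
  have "((-1/2 :: 'a) gchoose n) * (-4) ^ n = 4 ^ n * pochhammer (1/2) n / fact n"
    by (simp add: gbinomial_pochhammer power_mult_distrib[symmetric])
  also have "\<dots> = fact (2 * n) / (fact n * fact n)"
    by (simp add: fact_double power_mult)
  also have "\<dots> = of_nat ((2 * n) choose n)"
    by (simp add: binomial_fact)
  finally show ?thesis .
qed

lemma central_binomial_series:
  fixes u :: real
  assumes "\<bar>u\<bar> < 1/4"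
  shows "(\<lambda>n. of_nat ((2 * n) choose n) * u ^ n) sums (1 / sqrt (1 - 4 * u))"
proof -
  have "(\<lambda>n. ((-1/2) gchoose n) * (-4 * u) ^ n) sums (1 + -4 * u) powr (-1/2)"
    by (rule gen_binomial_real) (use assms in simp)
  moreover have "((-1/2) gchoose n) * (-4 * u) ^ n = of_nat ((2 * n) choose n) * u ^ n" for n
    by (simp only: power_mult_distrib mult.assoc[symmetric] gbinomial_minus_half_times_minus_4_power)
  moreover have "(1 + -4 * u) powr (-1/2) = 1 / sqrt (1 - 4 * u)"
    using assms by (simp add: powr_minus_divide powr_half_sqrt)
  ultimately show ?thesis
    by simp
qed

lemma negative_binomial_series:
  fixes y :: real
  assumes "\<bar>y\<bar> < 1"
  shows "(\<lambda>d. of_nat ((m + d) choose d) * y ^ d) sums (1 / (1 - y) ^ (m + 1))"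
proof -
  have "(\<lambda>d. (-(real m + 1) gchoose d) * (-y) ^ d) sums (1 + -y) powr (-(real m + 1))"
    by (rule gen_binomial_real) (use assms in simp)
  moreover have "(-(real m + 1) gchoose d) * (-y) ^ d = of_nat ((m + d) choose d) * y ^ d" for d
  proof -
    have "-(real m + 1) gchoose d = (-1) ^ d * ((real m + 1 + of_nat d - 1) gchoose d)"
      by (rule gbinomial_minus)
    also have "(real m + 1 + of_nat d - 1) gchoose d = of_nat ((m + d) choose d)"
      by (simp add: binomial_gbinomial)
    finally show ?thesis
      by (simp add: power_minus')
  qed
  moreover have "(1 + -y) powr (-(real m + 1)) = 1 / (1 - y) powr (real m + 1)"
    by (subst powr_minus_divide) simp
  moreover have "(1 - y) powr (real m + 1) = (1 - y) ^ (m + 1)"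
    using powr_realpow[of "1 - y" "m + 1"] assms by (simp add: add.commute)
  ultimately show ?thesis
    by simp
qed

lemma sums_diagonal_blocks:
  fixes c :: "nat \<times> nat \<Rightarrow> 'a::banach"
  assumes "k > 0"
    and rows_abs: "\<And>a. summable (\<lambda>d. norm (c (a, d)))"
    and total_abs: "summable (\<lambda>a. \<Sum>d. norm (c (a, d)))"
    and rows: "(\<lambda>a. \<Sum>d. c (a, d)) sums S"
  shows "(\<lambda>n. \<Sum>a | k * a \<le> n. c (a, n - k * a)) sums S"
proof -
  have "(\<lambda>z. norm (c z)) summable_on UNIV \<times> UNIV"
  proof (rule summable_on_SigmaI)
    show "((\<lambda>d. norm (c (a, d))) has_sum (\<Sum>d. norm (c (a, d)))) UNIV" for a
      by (rule sums_nonneg_imp_has_sum[OF summable_sums[OF rows_abs]]) simp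
    show "(\<lambda>a. \<Sum>d. norm (c (a, d))) summable_on UNIV"
      using total_abs by (intro summable_nonneg_imp_summable_on suminf_nonneg rows_abs) auto
  qed auto
  then have summable: "c summable_on UNIV \<times> UNIV"
    by (rule abs_summable_summable)
  have "(c has_sum S) (UNIV \<times> UNIV)"
  proof (rule has_sum_SigmaI[OF _ _ summable])
    show "((\<lambda>d. c (a, d)) has_sum (\<Sum>d. c (a, d))) UNIV" for a
      using norm_summable_imp_has_sum[OF rows_abs] summable_norm_cancel[OF rows_abs]
      by (simp add: summable_sums)
    have "norm (\<Sum>d. c (a, d)) \<le> (\<Sum>d. norm (c (a, d)))" for a
      by (rule summable_norm[OF rows_abs])
    then have "summable (\<lambda>a. norm (\<Sum>d. c (a, d)))"
      by (intro summable_comparison_test'[OF total_abs]) auto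
    then show "((\<lambda>a. \<Sum>d. c (a, d)) has_sum S) UNIV"
      by (rule norm_summable_imp_has_sum[OF _ rows])
  qed
  moreover have "((\<lambda>(n, a). c (a, n - k * a)) has_sum S) (SIGMA n:UNIV. {a. k * a \<le> n})
      = (c has_sum S) (UNIV \<times> UNIV)"
    by (rule has_sum_reindex_bij_witness[where j = "\<lambda>(n, a). (a, n - k * a)"
          and i = "\<lambda>(a, d). (k * a + d, a)"]) auto
  ultimately have reindexed:
    "((\<lambda>(n, a). c (a, n - k * a)) has_sum S) (SIGMA n:UNIV. {a. k * a \<le> n})"
    by simp
  have finite_blocks: "finite {a. k * a \<le> n}" for n
  proof (rule finite_subset)
    show "{a. k * a \<le> n} \<subseteq> {..n}"
      using \<open>k > 0\<close> by (auto intro: order.trans[rotated])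
  qed simp
  have "((\<lambda>n. \<Sum>a | k * a \<le> n. c (a, n - k * a)) has_sum S) UNIV"
    by (rule has_sum_SigmaD[OF reindexed]) (simp add: has_sum_finite finite_blocks)
  then show ?thesis
    by (rule has_sum_imp_sums)
qed

lemma central_negative_binomial_double_series:
  fixes x y :: real
  assumes "2 * \<bar>x\<bar> + \<bar>y\<bar> < 1"
  shows "(\<lambda>a. \<Sum>d. of_nat ((2 * a) choose a) * x ^ (2 * a) *
                       (of_nat ((2 * a + d) choose d) * y ^ d))
           sums (1 / sqrt ((1 - y)\<^sup>2 - 4 * x\<^sup>2))"
proof -
  have y: "\<bar>y\<bar> < 1" "1 - y > 0"
    using assms by auto
  define u where "u = x\<^sup>2 / (1 - y)\<^sup>2"
  have "(2 * \<bar>x\<bar>)\<^sup>2 < (1 - y)\<^sup>2"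
    using assms by (intro power_strict_mono) auto
  then have u: "\<bar>u\<bar> < 1/4"
    using y by (simp add: u_def divide_less_eq power_mult_distrib)
  have "(\<Sum>d. of_nat ((2 * a) choose a) * x ^ (2 * a) * (of_nat ((2 * a + d) choose d) * y ^ d))
      = 1 / (1 - y) * (of_nat ((2 * a) choose a) * u ^ a)" for a
  proof -
    have u_power: "u ^ a = x ^ (2 * a) / (1 - y) ^ (2 * a)"
      by (simp add: u_def power_divide power_mult)
    have "(\<lambda>d. of_nat ((2 * a) choose a) * x ^ (2 * a) * (of_nat ((2 * a + d) choose d) * y ^ d))
        sums (of_nat ((2 * a) choose a) * x ^ (2 * a) * (1 / (1 - y) ^ (2 * a + 1)))"
      by (intro sums_mult negative_binomial_series y)
    also have "of_nat ((2 * a) choose a) * x ^ (2 * a) * (1 / (1 - y) ^ (2 * a + 1))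
        = 1 / (1 - y) * (of_nat ((2 * a) choose a) * u ^ a)"
      unfolding u_power using y by (simp add: field_simps)
    finally show ?thesis
      by (rule sums_unique[symmetric])
  qed
  moreover have "(\<lambda>a. 1 / (1 - y) * (of_nat ((2 * a) choose a) * u ^ a))
      sums (1 / (1 - y) * (1 / sqrt (1 - 4 * u)))"
    by (intro sums_mult central_binomial_series u)
  moreover have "1 / (1 - y) * (1 / sqrt (1 - 4 * u)) = 1 / sqrt ((1 - y)\<^sup>2 - 4 * x\<^sup>2)"
  proof -
    have "1 - 4 * u = ((1 - y)\<^sup>2 - 4 * x\<^sup>2) / (1 - y)\<^sup>2"
      using y by (simp add: u_def field_simps)
    then show ?thesis
      using y by (simp add: real_sqrt_divide)
  qed
  ultimately show ?thesis
    by simp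
qed

lemma trinomial_middle_coeff_series:
  fixes b x :: real
  assumes "2 * \<bar>x\<bar> + \<bar>b * x\<bar> < 1"
  shows "(\<lambda>n. (\<Sum>a | 2 * a \<le> n.
              of_nat (n choose (2 * a)) * of_nat ((2 * a) choose a) * b ^ (n - 2 * a)) * x ^ n)
           sums (1 / sqrt ((1 - b * x)\<^sup>2 - 4 * x\<^sup>2))"
proof -
  define c :: "nat \<times> nat \<Rightarrow> real" where "c = (\<lambda>(a, d).
    of_nat ((2 * a) choose a) * x ^ (2 * a) * (of_nat ((2 * a + d) choose d) * (b * x) ^ d))"
  have norm_c: "norm (c (a, d))
      = of_nat ((2 * a) choose a) * \<bar>x\<bar> ^ (2 * a) *
        (of_nat ((2 * a + d) choose d) * \<bar>b * x\<bar> ^ d)" for a d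
    by (simp add: c_def abs_mult power_abs)
  have "(\<lambda>n. \<Sum>a | 2 * a \<le> n. c (a, n - 2 * a)) sums (1 / sqrt ((1 - b * x)\<^sup>2 - 4 * x\<^sup>2))"
  proof (rule sums_diagonal_blocks)
    show "summable (\<lambda>d. norm (c (a, d)))" for a
      unfolding norm_c using assms
      by (intro summable_mult sums_summable[OF negative_binomial_series]) auto
    show "summable (\<lambda>a. \<Sum>d. norm (c (a, d)))"
      unfolding norm_c using assms
      by (intro sums_summable[OF central_negative_binomial_double_series]) simp
    show "(\<lambda>a. \<Sum>d. c (a, d)) sums (1 / sqrt ((1 - b * x)\<^sup>2 - 4 * x\<^sup>2))"
      unfolding c_def using assms by (simp add: central_negative_binomial_double_series)
  qed simp
  moreover have "c (a, n - 2 * a)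
      = of_nat (n choose (2 * a)) * of_nat ((2 * a) choose a) * b ^ (n - 2 * a) * x ^ n"
    if "2 * a \<le> n" for a n
  proof -
    have "(2 * a + (n - 2 * a)) choose (n - 2 * a) = n choose (2 * a)"
      using that by (simp add: binomial_symmetric[symmetric])
    moreover have "x ^ n = x ^ (2 * a) * x ^ (n - 2 * a)"
      using that by (simp flip: power_add)
    ultimately show ?thesis
      by (simp add: c_def power_mult_distrib)
  qed
  ultimately show ?thesis
    by (simp add: sum_distrib_right)
qed

theorem theorem3p1:
  fixes t :: real
  shows "\<exists>r>0. \<forall>x::real. \<bar>x\<bar> < r \<longrightarrow>
    (\<lambda>n. (\<Sum>w\<in>G n. t ^ da w) * x ^ n)
      sums (1 / sqrt (1 - 4 * t * x + 4 * (t\<^sup>2 - 1) * x\<^sup>2))"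
proof -
  define r where "r = 1 / (2 * (1 + \<bar>t\<bar>))"
  have "r > 0"
    by (simp add: r_def add_pos_nonneg)
  moreover have "(\<lambda>n. (\<Sum>w\<in>G n. t ^ da w) * x ^ n)
      sums (1 / sqrt (1 - 4 * t * x + 4 * (t\<^sup>2 - 1) * x\<^sup>2))" if "\<bar>x\<bar> < r" for x
  proof -
    have "2 * \<bar>x\<bar> + \<bar>2 * t * x\<bar> < 1"
      using that by (simp add: r_def abs_mult field_simps)
    moreover have "(1 - 2 * t * x)\<^sup>2 - 4 * x\<^sup>2 = 1 - 4 * t * x + 4 * (t\<^sup>2 - 1) * x\<^sup>2"
      by (simp add: power2_eq_square algebra_simps)
    ultimately show ?thesis
      using trinomial_middle_coeff_series[of x "2 * t"]
      by (simp add: sum_G_eq_coeff coeff_trinomial_power_middle)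
  qed
  ultimately show ?thesis
    by blast
qed

end
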